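(* Let $(Y(t))_{t\in\mathbb{R}}$ be a real-valued centered stochastic process with stationary increments and finite second moments, and put $\sigma(t)^2:=\mathbb{E}\,Y(t)^2$ for $t\in\mathbb{R}$. Then for every Bernstein function $f$ there exists a real-valued stochastic process $(Z(t))_{t\in\mathbb{R}}$ whose covariance is \[ R_{f,\sigma}(s,t)=f\bigl(\sigma(s)^2+\sigma(t)^2\bigr)-f\bigl(\sigma(s-t)^2\bigr),\qquad s,t\in\mathbb{R}. \]
   Context: A Bernstein function is a function $f:[0,\infty)\to[0,\infty)$ admitting a representation $f(\lambda)=a+b\lambda+\int_0^\infty(1-e^{-x\lambda})\,\mu(dx)$ with constants $a,b\ge 0$ and a measure $\mu$ on $(0,\infty)$ with $\int\min\{x,1\}\,\mu(dx)<\infty$. "Stationary increments" is understood in the sense that $Y(0)=0$ and, for every $h\in\mathbb{R}$, the process $(Y(t+h)-Y(h))_{t\in\mathbb{R}}$ has the same finite-dimensional distributions as $(Y(t))_{t\in\mathbb{R}}$ (in particular $\mathbb{E}(Y(t)-Y(s))^2=\sigma(t-s)^2$). *)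

theory Defs
  imports "HOL-Probability.Probability"
begin

text \<open>Values of f at negative arguments are irrelevant.\<close>
definition bernstein_function :: "(real \<Rightarrow> real) \<Rightarrow> bool" where
  "bernstein_function f \<longleftrightarrow>
     (\<exists>a b (\<mu>::real measure). a \<ge> 0 \<and> b \<ge> 0 \<and>
        sets \<mu> = sets borel \<and> emeasure \<mu> {..0} = 0 \<and>
        (\<integral>\<^sup>+ x. ennreal (min x 1) \<partial>\<mu>) < \<infinity> \<and>
        (\<forall>l\<ge>0. f l = a + b * l + (\<integral>x. (1 - exp (- x * l)) \<partial>\<mu>)))"

definition stationary_increments :: "'a measure \<Rightarrow> (real \<Rightarrow> 'a \<Rightarrow> real) \<Rightarrow> bool" where
  "stationary_increments M Y \<longleftrightarrow>
     (AE \<omega> in M. Y 0 \<omega> = 0) \<and>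
     (\<forall>h. \<forall>J. finite J \<longrightarrow>
        distr M (PiM J (\<lambda>_. borel)) (\<lambda>\<omega>. \<lambda>j\<in>J. Y (j + h) \<omega> - Y h \<omega>) =
        distr M (PiM J (\<lambda>_. borel)) (\<lambda>\<omega>. \<lambda>j\<in>J. Y j \<omega>))"

definition cov_fun :: "'a measure \<Rightarrow> (real \<Rightarrow> 'a \<Rightarrow> real) \<Rightarrow> real \<Rightarrow> real \<Rightarrow> real" where
  "cov_fun N Z s t =
     (\<integral>\<omega>. (Z s \<omega> - (\<integral>\<eta>. Z s \<eta> \<partial>N)) * (Z t \<omega> - (\<integral>\<eta>. Z t \<eta> \<partial>N)) \<partial>N)"

end

theory Submission
  imports Defs
begin

text \<open>With C(s,t) = E Y(s) Y(t) and S = sigma(s)^2 + sigma(t)^2, stationary increments give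
  sigma(s - t)^2 = S - 2C, so the Bernstein representation of f turns the target kernel into
  f(S) - f(S - 2C) = 2bC + int e^(-xS) (e^(2xC) - 1) mu(dx).  In the expansion
  e^(2xC) = sum_n (2x)^n C^n / n!, each power C^n is the covariance of the product of n independent
  copies of Y.  So the kernel is realised by a random mixture: draw x from mu reweighted by min x 1,
  n geometrically, and independent copies Y_0, Y_1, ... of Y; put Z(t) = a(x,n,t) Y_0(t) ... Y_(k-1)(t)
  with k = max n 1 and deterministic weights a for which averaging over x and n reproduces the
  series, the term n = 0 carrying the linear part 2bC.  The law of the paths of Z is then a process
  indexed by the reals.\<close>

lemma integrable_mult_of_squares:
  fixes f g :: "'a \<Rightarrow> real"
  assumes [measurable]: "f \<in> borel_measurable M" "g \<in> borel_measurable M"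
    and "integrable M (\<lambda>x. (f x)\<^sup>2)" "integrable M (\<lambda>x. (g x)\<^sup>2)"
  shows "integrable M (\<lambda>x. f x * g x)"
proof (rule Bochner_Integration.integrable_bound)
  show "integrable M (\<lambda>x. (f x)\<^sup>2 + (g x)\<^sup>2)"
    using assms(3,4) by (rule Bochner_Integration.integrable_add)
  have "\<bar>u * v\<bar> \<le> u\<^sup>2 + v\<^sup>2" for u v :: real
  proof -
    have "2 * (\<bar>u\<bar> * \<bar>v\<bar>) \<le> u\<^sup>2 + v\<^sup>2"
      using sum_squares_bound[of "\<bar>u\<bar>" "\<bar>v\<bar>"] by (simp add: mult.assoc)
    moreover have "0 \<le> \<bar>u\<bar> * \<bar>v\<bar>"
      by simp
    ultimately show ?thesis
      unfolding abs_mult by linarith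
  qed
  then show "AE x in M. norm (f x * g x) \<le> norm ((f x)\<^sup>2 + (g x)\<^sup>2)"
    by simp
qed measurable

lemma
  fixes p :: "nat pmf" and h :: "nat \<Rightarrow> real"
  assumes "summable (\<lambda>n. pmf p n * \<bar>h n\<bar>)"
  shows integrable_measure_pmf_nat: "integrable (measure_pmf p) h"
    and integral_measure_pmf_nat: "(\<integral>n. h n \<partial>measure_pmf p) = (\<Sum>n. pmf p n * h n)"
proof -
  have "integrable (count_space UNIV) (\<lambda>n. pmf p n * h n)"
    using assms by (simp add: integrable_count_space_nat_iff abs_mult)
  then show "integrable (measure_pmf p) h" and "(\<integral>n. h n \<partial>measure_pmf p) = (\<Sum>n. pmf p n * h n)"
    unfolding measure_pmf_eq_density
    by (simp_all add: integrable_density integral_density integral_count_space_nat)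
qed

lemma stationary_increments_integral:
  fixes g :: "real \<Rightarrow> real"
  assumes "stationary_increments M Y" and [measurable]: "\<And>t. Y t \<in> borel_measurable M"
    and [measurable]: "g \<in> borel_measurable borel"
  shows "(\<integral>\<omega>. g (Y (s - t) \<omega>) \<partial>M) = (\<integral>\<omega>. g (Y s \<omega> - Y t \<omega>) \<partial>M)"
proof -
  let ?P = "PiM {s - t} (\<lambda>_. borel) :: (real \<Rightarrow> real) measure"
  have distr_eq: "distr M ?P (\<lambda>\<omega>. \<lambda>j\<in>{s - t}. Y (j + t) \<omega> - Y t \<omega>) =
      distr M ?P (\<lambda>\<omega>. \<lambda>j\<in>{s - t}. Y j \<omega>)"
    using assms(1) unfolding stationary_increments_def by blast
  have [measurable]: "(\<lambda>h. g (h (s - t))) \<in> borel_measurable ?P"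
    by measurable
  have "(\<integral>\<omega>. g (Y (s - t) \<omega>) \<partial>M) = (\<integral>h. g (h (s - t)) \<partial>distr M ?P (\<lambda>\<omega>. \<lambda>j\<in>{s - t}. Y j \<omega>))"
    by (subst integral_distr) simp_all
  also have "\<dots> = (\<integral>\<omega>. g (Y s \<omega> - Y t \<omega>) \<partial>M)"
    unfolding distr_eq[symmetric] by (subst integral_distr) simp_all
  finally show ?thesis .
qed

lemma
  fixes g :: "'a \<Rightarrow> real"
  assumes "prob_space M" and "integrable M g"
  shows integrable_prod_PiM_iid: "integrable (PiM UNIV (\<lambda>_::nat. M)) (\<lambda>\<omega>. \<Prod>i<k. g (\<omega> i))"
    and integral_prod_PiM_iid:
      "(\<integral>\<omega>. (\<Prod>i<k. g (\<omega> i)) \<partial>PiM UNIV (\<lambda>_::nat. M)) = (\<integral>x. g x \<partial>M) ^ k"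
proof -
  interpret product_prob_space "\<lambda>_::nat. M" UNIV
    using assms(1) by (rule product_prob_spaceI)
  let ?restr = "\<lambda>\<omega>. restrict \<omega> {..<k}"
  have distr_restr: "distr (PiM UNIV (\<lambda>_. M)) (PiM {..<k} (\<lambda>_. M)) ?restr = PiM {..<k} (\<lambda>_. M)"
    by (rule distr_PiM_restrict_finite) auto
  have restr_meas: "?restr \<in> measurable (PiM UNIV (\<lambda>_. M)) (PiM {..<k} (\<lambda>_. M))"
    by (rule measurable_restrict_subset) auto
  have [measurable]: "g \<in> borel_measurable M"
    using assms(2) by auto
  have prod_meas: "(\<lambda>\<omega>. \<Prod>i<k. g (\<omega> i)) \<in> borel_measurable (PiM {..<k} (\<lambda>_. M))"
    by measurable
  have prod_restr: "(\<Prod>i<k. g (?restr \<omega> i)) = (\<Prod>i<k. g (\<omega> i))" for \<omega>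
    by (auto intro!: prod.cong)
  have "integrable (PiM {..<k} (\<lambda>_. M)) (\<lambda>\<omega>. \<Prod>i<k. g (\<omega> i))"
    using assms(2) by (intro product_integrable_prod) auto
  then show "integrable (PiM UNIV (\<lambda>_::nat. M)) (\<lambda>\<omega>. \<Prod>i<k. g (\<omega> i))"
    using integrable_distr_eq[OF restr_meas prod_meas] by (simp add: distr_restr prod_restr)
  have "(\<integral>\<omega>. (\<Prod>i<k. g (\<omega> i)) \<partial>PiM UNIV (\<lambda>_::nat. M)) =
      (\<integral>\<omega>. (\<Prod>i<k. g (\<omega> i)) \<partial>PiM {..<k} (\<lambda>_. M))"
    using integral_distr[OF restr_meas prod_meas] by (simp add: distr_restr prod_restr)
  also have "\<dots> = (\<Prod>i<k. (\<integral>x. g x \<partial>M))"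
    using assms(2) by (intro product_integral_prod) auto
  finally show "(\<integral>\<omega>. (\<Prod>i<k. g (\<omega> i)) \<partial>PiM UNIV (\<lambda>_::nat. M)) = (\<integral>x. g x \<partial>M) ^ k"
    by simp
qed

lemma path_space_realization:
  fixes P :: "'a measure" and Z :: "real \<Rightarrow> 'a \<Rightarrow> real"
  assumes "prob_space P" and [measurable]: "\<And>t. Z t \<in> borel_measurable P"
    and "\<And>t. integrable P (\<lambda>\<omega>. (Z t \<omega>)\<^sup>2)"
  shows "\<exists>(N :: (real \<Rightarrow> real) measure) (Z' :: real \<Rightarrow> (real \<Rightarrow> real) \<Rightarrow> real).
           prob_space N \<and> (\<forall>t. Z' t \<in> borel_measurable N \<and> integrable N (\<lambda>\<omega>. (Z' t \<omega>)\<^sup>2)) \<and>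
           (\<forall>s t. cov_fun N Z' s t = cov_fun P Z s t)"
proof (intro exI conjI allI)
  let ?B = "PiM UNIV (\<lambda>_::real. borel) :: (real \<Rightarrow> real) measure"
  define N where "N = distr P ?B (\<lambda>\<omega> t. Z t \<omega>)"
  have paths_meas: "(\<lambda>\<omega> t. Z t \<omega>) \<in> measurable P ?B"
    by (rule measurable_PiM_single') auto
  have sets_N [measurable_cong]: "sets N = sets ?B"
    by (simp add: N_def)
  have integral_N: "(\<integral>h. g h \<partial>N) = (\<integral>\<omega>. g (\<lambda>t. Z t \<omega>) \<partial>P)"
    if "g \<in> borel_measurable ?B" for g :: "(real \<Rightarrow> real) \<Rightarrow> real"
    using that by (simp add: N_def integral_distr[OF paths_meas])
  show "prob_space N"
    unfolding N_def using assms(1) paths_meas by (rule prob_space.prob_space_distr)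
  show "(\<lambda>h. h t) \<in> borel_measurable N" for t
    by measurable
  show "integrable N (\<lambda>h. (h t)\<^sup>2)" for t
    unfolding N_def by (subst integrable_distr_eq[OF paths_meas]) (simp_all add: assms(3))
  show "cov_fun N (\<lambda>t h. h t) s t = cov_fun P Z s t" for s t
    unfolding cov_fun_def by (simp add: integral_N)
qed

locale levy_measure =
  fixes \<mu> :: "real measure"
  assumes sets_levy [measurable_cong]: "sets \<mu> = sets borel"
    and emeasure_levy_nonpos: "emeasure \<mu> {..0} = 0"
    and nn_integral_levy_min_finite: "(\<integral>\<^sup>+ x. ennreal (min x 1) \<partial>\<mu>) < \<infinity>"
begin

lemma AE_levy_pos: "AE x in \<mu>. 0 < x"
proof (rule AE_I')
  show "{..0::real} \<in> null_sets \<mu>"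
    using emeasure_levy_nonpos by (simp add: null_sets_def sets_levy)
qed auto

lemma integrable_levy_one_minus_exp:
  assumes l: "0 \<le> l"
  shows "integrable \<mu> (\<lambda>x. 1 - exp (- x * l))"
proof (rule integrableI_bounded)
  show "(\<lambda>x. 1 - exp (- x * l)) \<in> borel_measurable \<mu>"
    by measurable
  have bound: "\<bar>1 - exp (- x * l)\<bar> \<le> max l 1 * min x 1" if x: "0 < x" for x
  proof -
    have exp_le_1: "exp (- x * l) \<le> 1"
      using x l by simp
    show ?thesis
    proof (cases "x \<le> 1")
      case True
      have "1 - x * l \<le> exp (- x * l)"
        using exp_ge_add_one_self[of "- x * l"] by simp
      moreover have "x * l \<le> max l 1 * x"
        using x by (simp add: mult.commute mult_left_mono)
      ultimately show ?thesis
        using True exp_le_1 by simp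
    next
      case False
      have "\<bar>1 - exp (- x * l)\<bar> \<le> 1"
        using exp_le_1 exp_gt_zero[of "- x * l"] by simp
      then show ?thesis
        using False by simp
    qed
  qed
  have "(\<integral>\<^sup>+x. ennreal (norm (1 - exp (- x * l))) \<partial>\<mu>) \<le> (\<integral>\<^sup>+x. ennreal (max l 1) * ennreal (min x 1) \<partial>\<mu>)"
  proof (rule nn_integral_mono_AE)
    show "AE x in \<mu>. ennreal (norm (1 - exp (- x * l))) \<le> ennreal (max l 1) * ennreal (min x 1)"
      using AE_levy_pos
    proof eventually_elim
      case (elim x)
      then have "ennreal (max l 1) * ennreal (min x 1) = ennreal (max l 1 * min x 1)"
        by (simp add: ennreal_mult)
      then show ?case
        using bound[OF elim] by (metis ennreal_leI real_norm_def)
    qed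
  qed
  also have "\<dots> = ennreal (max l 1) * (\<integral>\<^sup>+x. ennreal (min x 1) \<partial>\<mu>)"
    by (rule nn_integral_cmult) auto
  also have "\<dots> < \<infinity>"
    using nn_integral_levy_min_finite by (simp add: ennreal_mult_less_top)
  finally show "(\<integral>\<^sup>+x. ennreal (norm (1 - exp (- x * l))) \<partial>\<mu>) < \<infinity>" .
qed

lemma integrable_levy_exp_diff:
  assumes "0 \<le> u" "0 \<le> l"
  shows "integrable \<mu> (\<lambda>x. exp (- x * u) - exp (- x * l))"
  using Bochner_Integration.integrable_diff[OF integrable_levy_one_minus_exp[OF assms(2)]
      integrable_levy_one_minus_exp[OF assms(1)]]
  by simp

lemma bernstein_diff:
  assumes f: "\<And>l. 0 \<le> l \<Longrightarrow> f l = a + b * l + (\<integral>x. 1 - exp (- x * l) \<partial>\<mu>)"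
    and "0 \<le> u" "0 \<le> l"
  shows "f l - f u = b * (l - u) + (\<integral>x. exp (- x * u) - exp (- x * l) \<partial>\<mu>)"
proof -
  have "(\<integral>x. exp (- x * u) - exp (- x * l) \<partial>\<mu>) =
      (\<integral>x. (1 - exp (- x * l)) - (1 - exp (- x * u)) \<partial>\<mu>)"
    by simp
  also have "\<dots> = (\<integral>x. 1 - exp (- x * l) \<partial>\<mu>) - (\<integral>x. 1 - exp (- x * u) \<partial>\<mu>)"
    using assms(2,3) by (intro Bochner_Integration.integral_diff integrable_levy_one_minus_exp)
  finally show ?thesis
    using f[OF \<open>0 \<le> l\<close>] f[OF \<open>0 \<le> u\<close>] by (simp add: algebra_simps)
qed

definition levy_mass :: real where
  "levy_mass = enn2real (\<integral>\<^sup>+ x. ennreal (min x 1) \<partial>\<mu>)"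

text \<open>When \<open>\<mu> = 0\<close> any probability on \<open>(0, \<infinity>)\<close> would do; we take the point mass at 1.\<close>
definition levy_prob :: "real measure" where
  "levy_prob = (if levy_mass = 0 then return borel 1
     else density \<mu> (\<lambda>x. ennreal (min x 1 / levy_mass)))"

lemma levy_mass_nonneg: "0 \<le> levy_mass"
  by (simp add: levy_mass_def)

lemma ennreal_levy_mass: "ennreal levy_mass = (\<integral>\<^sup>+x. ennreal (min x 1) \<partial>\<mu>)"
  unfolding levy_mass_def using nn_integral_levy_min_finite by (intro ennreal_enn2real) auto

lemma sets_levy_prob [measurable_cong]: "sets levy_prob = sets borel"
  by (simp add: levy_prob_def sets_levy)

lemma prob_space_levy_prob: "prob_space levy_prob"
proof (cases "levy_mass = 0")
  case True
  then show ?thesis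
    by (simp add: levy_prob_def prob_space_return)
next
  case False
  then have mass_pos: "0 < levy_mass"
    using levy_mass_nonneg by simp
  have "emeasure (density \<mu> (\<lambda>x. ennreal (min x 1 / levy_mass))) (space \<mu>) =
      (\<integral>\<^sup>+x. ennreal (min x 1) * ennreal (1 / levy_mass) \<partial>\<mu>)"
    using mass_pos by (subst emeasure_density) (auto intro!: nn_integral_cong simp: ennreal_mult''[symmetric])
  also have "\<dots> = ennreal levy_mass * ennreal (1 / levy_mass)"
    by (subst nn_integral_multc) (auto simp: ennreal_levy_mass)
  also have "\<dots> = 1"
    using mass_pos by (simp add: ennreal_mult[symmetric])
  finally show ?thesis
    using False unfolding levy_prob_def by (intro prob_spaceI) simp
qed

lemma levy_prob_density:
  "levy_mass \<noteq> 0 \<Longrightarrow> levy_prob = density \<mu> (\<lambda>x. ennreal (min x 1 / levy_mass))"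
  by (simp add: levy_prob_def)

lemma AE_levy_prob_pos: "AE x in levy_prob. 0 < x"
proof (cases "levy_mass = 0")
  case True
  then show ?thesis
    unfolding levy_prob_def by (simp add: AE_return)
next
  case False
  then show ?thesis
    using AE_levy_pos by (subst levy_prob_density, simp, subst AE_density) (auto elim: eventually_mono)
qed

lemma
  fixes h :: "real \<Rightarrow> real"
  assumes h: "integrable \<mu> h"
  shows integrable_levy_prob: "integrable levy_prob (\<lambda>x. levy_mass * h x / min x 1)"
    and integral_levy_prob: "(\<integral>x. levy_mass * h x / min x 1 \<partial>levy_prob) = (\<integral>x. h x \<partial>\<mu>)"
proof -
  have [measurable]: "h \<in> borel_measurable borel"
    using h measurable_cong_sets[OF sets_levy refl] by auto
  have null_case: "(\<integral>x. h x \<partial>\<mu>) = 0" if "levy_mass = 0"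
  proof -
    have "AE x in \<mu>. ennreal (min x 1) = 0"
      using ennreal_levy_mass that by (subst nn_integral_0_iff_AE[symmetric]) auto
    then have "AE x in \<mu>. False"
      using AE_levy_pos by eventually_elim auto
    then show ?thesis
      by (subst integral_cong_AE[where g = "\<lambda>_. 0"]) (auto elim: eventually_mono)
  qed
  have density_h: "AE x in \<mu>. min x 1 / levy_mass * (levy_mass * h x / min x 1) = h x"
    if "0 < levy_mass"
    using AE_levy_pos by eventually_elim (use that in simp)
  show "integrable levy_prob (\<lambda>x. levy_mass * h x / min x 1)"
  proof (cases "levy_mass = 0")
    case False
    then have "0 < levy_mass"
      using levy_mass_nonneg by simp
    then have "integrable \<mu> (\<lambda>x. min x 1 / levy_mass * (levy_mass * h x / min x 1))"
      using h density_h by (subst integrable_cong_AE) auto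
    moreover have "AE x in \<mu>. 0 \<le> min x 1 / levy_mass"
      using AE_levy_pos by eventually_elim (use \<open>0 < levy_mass\<close> in simp)
    ultimately show ?thesis
      using False by (simp add: levy_prob_density integrable_density)
  qed simp
  show "(\<integral>x. levy_mass * h x / min x 1 \<partial>levy_prob) = (\<integral>x. h x \<partial>\<mu>)"
  proof (cases "levy_mass = 0")
    case False
    then have "0 < levy_mass"
      using levy_mass_nonneg by simp
    have "AE x in \<mu>. 0 \<le> min x 1 / levy_mass"
      using AE_levy_pos by eventually_elim (use \<open>0 < levy_mass\<close> in simp)
    then have "(\<integral>x. levy_mass * h x / min x 1 \<partial>levy_prob) =
        (\<integral>x. min x 1 / levy_mass * (levy_mass * h x / min x 1) \<partial>\<mu>)"
      using False by (simp add: levy_prob_density integral_density)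
    also have "\<dots> = (\<integral>x. h x \<partial>\<mu>)"
      using density_h \<open>0 < levy_mass\<close> by (intro integral_cong_AE) auto
    finally show ?thesis .
  qed (simp add: null_case)
qed

end

locale bernstein_mixture = levy_measure \<mu> + prob_space M
  for \<mu> :: "real measure" and M :: "'a measure" +
  fixes Y :: "real \<Rightarrow> 'a \<Rightarrow> real" and b :: real
  assumes Y_measurable [measurable]: "\<And>t. Y t \<in> borel_measurable M"
    and Y_square_integrable: "\<And>t. integrable M (\<lambda>\<omega>. (Y t \<omega>)\<^sup>2)"
    and Y_mean_zero: "\<And>t. (\<integral>\<omega>. Y t \<omega> \<partial>M) = 0"
    and b_nonneg: "0 \<le> b"
begin

definition var_Y :: "real \<Rightarrow> real" where
  "var_Y t = (\<integral>\<omega>. (Y t \<omega>)\<^sup>2 \<partial>M)"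

definition cov_Y :: "real \<Rightarrow> real \<Rightarrow> real" where
  "cov_Y s t = (\<integral>\<omega>. Y s \<omega> * Y t \<omega> \<partial>M)"

lemma integrable_Y: "integrable M (Y t)"
  by (rule square_integrable_imp_integrable[OF Y_measurable Y_square_integrable])

lemma integrable_Y_mult: "integrable M (\<lambda>\<omega>. Y s \<omega> * Y t \<omega>)"
  using Y_measurable Y_measurable Y_square_integrable Y_square_integrable
  by (rule integrable_mult_of_squares)

lemma cov_Y_diag: "cov_Y t t = var_Y t"
  by (simp add: cov_Y_def var_Y_def power2_eq_square)

lemma var_Y_nonneg: "0 \<le> var_Y t"
  unfolding var_Y_def by (rule integral_nonneg_AE) simp

lemma integral_Y_diff_sq: "(\<integral>\<omega>. (Y s \<omega> - Y t \<omega>)\<^sup>2 \<partial>M) = var_Y s + var_Y t - 2 * cov_Y s t"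
proof -
  have "(\<integral>\<omega>. (Y s \<omega> - Y t \<omega>)\<^sup>2 \<partial>M) = (\<integral>\<omega>. (Y s \<omega>)\<^sup>2 + (Y t \<omega>)\<^sup>2 - 2 * (Y s \<omega> * Y t \<omega>) \<partial>M)"
    by (simp add: power2_eq_square algebra_simps)
  also have "\<dots> = var_Y s + var_Y t - 2 * cov_Y s t"
    unfolding var_Y_def cov_Y_def by (simp add: Y_square_integrable integrable_Y_mult)
  finally show ?thesis .
qed

lemma cov_Y_le: "2 * cov_Y s t \<le> var_Y s + var_Y t"
proof -
  have "0 \<le> (\<integral>\<omega>. (Y s \<omega> - Y t \<omega>)\<^sup>2 \<partial>M)"
    by (rule integral_nonneg_AE) simp
  then show ?thesis
    unfolding integral_Y_diff_sq by simp
qed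

text \<open>The factor \<open>2 ^ Suc n\<close> cancels the weight \<open>pmf (geometric_pmf (1/2)) n\<close>.\<close>
definition mix_weight :: "real \<Rightarrow> nat \<Rightarrow> real" where
  "mix_weight x n = 2 ^ Suc n * levy_mass * (2 * x) ^ n / (fact n * min x 1)"

definition mix_coeff :: "real \<Rightarrow> nat \<Rightarrow> real \<Rightarrow> real" where
  "mix_coeff x n t =
     (if n = 0 then sqrt (4 * b) else if x \<le> 0 then 0 else sqrt (mix_weight x n) * exp (- x * var_Y t))"

definition cond_cov :: "real \<Rightarrow> real \<Rightarrow> real \<Rightarrow> real \<times> nat \<Rightarrow> real" where
  "cond_cov s t C u = mix_coeff (fst u) (snd u) s * mix_coeff (fst u) (snd u) t * C ^ max (snd u) 1"

definition jump_kernel :: "real \<Rightarrow> real \<Rightarrow> real \<Rightarrow> real" where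
  "jump_kernel S C x =
     (if 0 < x then levy_mass * (exp (- x * (S - 2 * C)) - exp (- x * S)) / min x 1 else 0)"

lemma mix_weight_nonneg: "0 < x \<Longrightarrow> 0 \<le> mix_weight x n"
  unfolding mix_weight_def using levy_mass_nonneg by (intro divide_nonneg_pos mult_nonneg_nonneg) auto

lemma mix_coeff_nonneg: "0 \<le> mix_coeff x n t"
  using b_nonneg mix_weight_nonneg[of x n] by (simp add: mix_coeff_def)

lemma pmf_mix_coeff:
  "pmf (geometric_pmf (1/2)) n * (mix_coeff x n s * mix_coeff x n t) =
     (if n = 0 then 2 * b else if x \<le> 0 then 0
      else levy_mass / min x 1 * exp (- x * (var_Y s + var_Y t)) * ((2 * x) ^ n / fact n))"
proof (cases "n = 0 \<or> x \<le> 0")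
  case True
  then show ?thesis
    using b_nonneg by (auto simp: mix_coeff_def)
next
  case False
  then have coeff_eq: "mix_coeff x n s * mix_coeff x n t =
      mix_weight x n * (exp (- x * var_Y s) * exp (- x * var_Y t))"
    using mix_weight_nonneg[of x n]
    by (simp add: mix_coeff_def)
  have pmf_weight: "pmf (geometric_pmf (1/2)) n * mix_weight x n =
      levy_mass / min x 1 * ((2 * x) ^ n / fact n)"
    by (simp add: mix_weight_def field_simps)
  have "pmf (geometric_pmf (1/2)) n * (mix_coeff x n s * mix_coeff x n t) =
      (pmf (geometric_pmf (1/2)) n * mix_weight x n) * (exp (- x * var_Y s) * exp (- x * var_Y t))"
    by (simp only: coeff_eq mult.assoc)
  also have "\<dots> = levy_mass / min x 1 * ((2 * x) ^ n / fact n) * exp (- x * (var_Y s + var_Y t))"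
    by (simp only: pmf_weight exp_add[symmetric] distrib_left mult_minus_left)
  also have "\<dots> = levy_mass / min x 1 * exp (- x * (var_Y s + var_Y t)) * ((2 * x) ^ n / fact n)"
    by (simp only: mult_ac)
  finally show ?thesis
    using False by simp
qed

lemma mix_series:
  "(\<lambda>n. pmf (geometric_pmf (1/2)) n * cond_cov s t C (x, n)) sums
     (2 * b * C + jump_kernel (var_Y s + var_Y t) C x)"
proof (cases "0 < x")
  case False
  then have "(\<lambda>n. pmf (geometric_pmf (1/2)) n * cond_cov s t C (x, n)) =
      (\<lambda>n. if n = 0 then 2 * b * C else 0)"
    using pmf_mix_coeff[of _ x s t] by (auto simp: cond_cov_def fun_eq_iff mult.assoc[symmetric])
  then show ?thesis
    using False sums_single[of 0 "\<lambda>_. 2 * b * C"] by (simp add: jump_kernel_def)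
next
  case True
  define S where "S = var_Y s + var_Y t"
  define K where "K = levy_mass / min x 1 * exp (- x * S)"
  have term_eq: "pmf (geometric_pmf (1/2)) n * cond_cov s t C (x, n) =
      K * ((2 * x * C) ^ n /\<^sub>R fact n) + (if n = 0 then 2 * b * C - K else 0)" for n
  proof -
    have "pmf (geometric_pmf (1/2)) n * cond_cov s t C (x, n) =
        (pmf (geometric_pmf (1/2)) n * (mix_coeff x n s * mix_coeff x n t)) * C ^ max n 1"
      by (simp add: cond_cov_def mult.assoc)
    also have "\<dots> = (if n = 0 then 2 * b else K * ((2 * x) ^ n / fact n)) * C ^ max n 1"
      using True by (simp only: pmf_mix_coeff K_def S_def not_le[symmetric] if_False)
    also have "\<dots> = K * ((2 * x * C) ^ n /\<^sub>R fact n) + (if n = 0 then 2 * b * C - K else 0)"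
      by (cases "n = 0") (simp_all add: power_mult_distrib divide_inverse mult_ac)
    finally show ?thesis .
  qed
  have "(\<lambda>n. K * ((2 * x * C) ^ n /\<^sub>R fact n) + (if n = 0 then 2 * b * C - K else 0)) sums
      (K * exp (2 * x * C) + (2 * b * C - K))"
    by (intro sums_add sums_mult exp_converges sums_single)
  moreover have "K * exp (2 * x * C) + (2 * b * C - K) = 2 * b * C + jump_kernel S C x"
  proof -
    have "exp (- x * (S - 2 * C)) = exp (- x * S) * exp (2 * x * C)"
      by (simp add: exp_add[symmetric] algebra_simps)
    then show ?thesis
      using True by (simp add: jump_kernel_def K_def right_diff_distrib diff_divide_distrib)
  qed
  ultimately show ?thesis
    unfolding term_eq S_def by simp
qed

lemma
  assumes "0 \<le> S" "2 * C \<le> S"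
  shows integrable_jump_kernel: "integrable levy_prob (jump_kernel S C)"
    and integral_jump_kernel:
      "(\<integral>x. jump_kernel S C x \<partial>levy_prob) = (\<integral>x. exp (- x * (S - 2 * C)) - exp (- x * S) \<partial>\<mu>)"
proof -
  let ?h = "\<lambda>x. exp (- x * (S - 2 * C)) - exp (- x * S)"
  have h: "integrable \<mu> ?h"
    using assms by (intro integrable_levy_exp_diff) auto
  have [measurable]: "jump_kernel S C \<in> borel_measurable levy_prob"
    unfolding jump_kernel_def by measurable
  have jump_eq: "AE x in levy_prob. levy_mass * ?h x / min x 1 = jump_kernel S C x"
    using AE_levy_prob_pos by eventually_elim (simp add: jump_kernel_def)
  show "integrable levy_prob (jump_kernel S C)"
    using integrable_levy_prob[OF h] jump_eq by (subst integrable_cong_AE[symmetric]) auto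
  show "(\<integral>x. jump_kernel S C x \<partial>levy_prob) = (\<integral>x. ?h x \<partial>\<mu>)"
    using integral_levy_prob[OF h] integral_cong_AE[OF _ _ jump_eq] by simp
qed

lemma abs_cond_cov: "\<bar>cond_cov s t C u\<bar> = cond_cov s t \<bar>C\<bar> u"
  using mix_coeff_nonneg by (simp add: cond_cov_def abs_mult power_abs)

lemma
  shows integrable_geometric_cond_cov:
      "integrable (geometric_pmf (1/2)) (\<lambda>n. cond_cov s t C (x, n))"
    and integral_geometric_cond_cov:
      "(\<integral>n. cond_cov s t C (x, n) \<partial>geometric_pmf (1/2)) =
        2 * b * C + jump_kernel (var_Y s + var_Y t) C x"
proof -
  have "summable (\<lambda>n. pmf (geometric_pmf (1/2)) n * \<bar>cond_cov s t C (x, n)\<bar>)"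
    using mix_series[of s t "\<bar>C\<bar>" x] by (simp add: abs_cond_cov sums_iff)
  then show "integrable (geometric_pmf (1/2)) (\<lambda>n. cond_cov s t C (x, n))"
    and "(\<integral>n. cond_cov s t C (x, n) \<partial>geometric_pmf (1/2)) =
        2 * b * C + jump_kernel (var_Y s + var_Y t) C x"
    using mix_series[of s t C x]
    by (simp_all add: integrable_measure_pmf_nat integral_measure_pmf_nat sums_iff)
qed

definition mix_index :: "(real \<times> nat) measure" where
  "mix_index = levy_prob \<Otimes>\<^sub>M measure_pmf (geometric_pmf (1/2))"

definition iid_copies :: "(nat \<Rightarrow> 'a) measure" where
  "iid_copies = PiM UNIV (\<lambda>_. M)"

definition mix_space :: "((real \<times> nat) \<times> (nat \<Rightarrow> 'a)) measure" where
  "mix_space = mix_index \<Otimes>\<^sub>M iid_copies"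

definition mix_process :: "real \<Rightarrow> (real \<times> nat) \<times> (nat \<Rightarrow> 'a) \<Rightarrow> real" where
  "mix_process t w =
     mix_coeff (fst (fst w)) (snd (fst w)) t * (\<Prod>i<max (snd (fst w)) 1. Y t (snd w i))"

lemma pair_prob_space_mix_index: "pair_prob_space levy_prob (geometric_pmf (1/2))"
  by (simp add: pair_prob_space_def pair_sigma_finite_def prob_space_levy_prob
      measure_pmf.prob_space_axioms prob_space_imp_sigma_finite)

lemma prob_space_mix_index: "prob_space mix_index"
  unfolding mix_index_def using prob_space_levy_prob measure_pmf.prob_space_axioms
  by (rule prob_space_pair)

lemma prob_space_iid_copies: "prob_space iid_copies"
  unfolding iid_copies_def by (rule prob_space_PiM) (rule prob_space_axioms)

lemma pair_prob_space_mix_space: "pair_prob_space mix_index iid_copies"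
  by (simp add: pair_prob_space_def pair_sigma_finite_def prob_space_mix_index prob_space_iid_copies
      prob_space_imp_sigma_finite)

lemma prob_space_mix_space: "prob_space mix_space"
  unfolding mix_space_def using prob_space_mix_index prob_space_iid_copies by (rule prob_space_pair)

lemma mix_coeff_measurable [measurable]: "(\<lambda>x. mix_coeff x n t) \<in> borel_measurable borel"
  unfolding mix_coeff_def mix_weight_def by measurable

lemma cond_cov_measurable: "cond_cov s t C \<in> borel_measurable mix_index"
proof -
  have "(\<lambda>u. (\<lambda>n u. mix_coeff (fst u) n s * mix_coeff (fst u) n t * C ^ max n 1) (snd u) u)
      \<in> borel_measurable mix_index"
    by (rule measurable_compose_countable) (unfold mix_index_def, measurable)
  then show ?thesis
    by (simp add: cond_cov_def[abs_def])
qed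

lemma mix_process_measurable [measurable]: "mix_process t \<in> borel_measurable mix_space"
proof -
  have "(\<lambda>w. (\<lambda>n w. mix_coeff (fst (fst w)) n t * (\<Prod>i<max n 1. Y t (snd w i))) (snd (fst w)) w)
      \<in> borel_measurable mix_space"
    by (rule measurable_compose_countable) (unfold mix_space_def mix_index_def iid_copies_def, measurable)
  then show ?thesis
    by (simp add: mix_process_def[abs_def])
qed

lemma integrable_mix_index:
  assumes "2 * \<bar>C\<bar> \<le> var_Y s + var_Y t"
  shows "integrable mix_index (cond_cov s t C)"
proof -
  interpret pair_prob_space levy_prob "geometric_pmf (1/2)"
    by (rule pair_prob_space_mix_index)
  have "integrable (levy_prob \<Otimes>\<^sub>M geometric_pmf (1/2)) (cond_cov s t C)"
  proof (rule Fubini_integrable)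
    show "cond_cov s t C \<in> borel_measurable (levy_prob \<Otimes>\<^sub>M geometric_pmf (1/2))"
      using cond_cov_measurable by (simp add: mix_index_def)
    have "integrable levy_prob (\<lambda>x. 2 * b * \<bar>C\<bar> + jump_kernel (var_Y s + var_Y t) \<bar>C\<bar> x)"
      using assms var_Y_nonneg[of s] var_Y_nonneg[of t] prob_space_levy_prob
      by (intro Bochner_Integration.integrable_add integrable_jump_kernel
          finite_measure.integrable_const prob_space.finite_measure) auto
    then show "integrable levy_prob (\<lambda>x. \<integral>n. norm (cond_cov s t C (x, n)) \<partial>geometric_pmf (1/2))"
      by (simp add: abs_cond_cov integral_geometric_cond_cov)
    show "AE x in levy_prob. integrable (geometric_pmf (1/2)) (\<lambda>n. cond_cov s t C (x, n))"
      by (simp add: integrable_geometric_cond_cov)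
  qed
  then show ?thesis
    by (simp add: mix_index_def)
qed

lemma integral_mix_index:
  assumes "integrable mix_index (cond_cov s t C)" and "2 * C \<le> var_Y s + var_Y t"
  shows "(\<integral>u. cond_cov s t C u \<partial>mix_index) =
    2 * b * C + (\<integral>x. exp (- x * (var_Y s + var_Y t - 2 * C)) - exp (- x * (var_Y s + var_Y t)) \<partial>\<mu>)"
proof -
  interpret pair_prob_space levy_prob "geometric_pmf (1/2)"
    by (rule pair_prob_space_mix_index)
  have S: "0 \<le> var_Y s + var_Y t"
    using var_Y_nonneg[of s] var_Y_nonneg[of t] by simp
  have "(\<integral>u. cond_cov s t C u \<partial>mix_index) =
      (\<integral>x. (\<integral>n. cond_cov s t C (x, n) \<partial>geometric_pmf (1/2)) \<partial>levy_prob)"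
    using assms(1) integral_fst'[of "cond_cov s t C"] by (simp add: mix_index_def)
  also have "\<dots> = (\<integral>x. 2 * b * C + jump_kernel (var_Y s + var_Y t) C x \<partial>levy_prob)"
    by (simp add: integral_geometric_cond_cov)
  also have "\<dots> = 2 * b * C + (\<integral>x. jump_kernel (var_Y s + var_Y t) C x \<partial>levy_prob)"
    using integrable_jump_kernel[OF S assms(2)] by (simp add: M1.prob_space)
  finally show ?thesis
    by (simp add: integral_jump_kernel[OF S assms(2)])
qed

lemma
  shows integrable_mix_process_iid: "integrable iid_copies (\<lambda>\<omega>. mix_process t (u, \<omega>))"
    and integral_mix_process_iid: "(\<integral>\<omega>. mix_process t (u, \<omega>) \<partial>iid_copies) = 0"
proof -
  have "mix_process t (u, \<omega>) = mix_coeff (fst u) (snd u) t * (\<Prod>i<max (snd u) 1. Y t (\<omega> i))" for \<omega>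
    by (simp add: mix_process_def)
  then show "integrable iid_copies (\<lambda>\<omega>. mix_process t (u, \<omega>))"
    and "(\<integral>\<omega>. mix_process t (u, \<omega>) \<partial>iid_copies) = 0"
    using integrable_prod_PiM_iid[OF prob_space_axioms integrable_Y]
      integral_prod_PiM_iid[OF prob_space_axioms integrable_Y]
    by (simp_all add: iid_copies_def Y_mean_zero less_max_iff_disj)
qed

lemma
  shows integrable_mix_process_mult_iid:
      "integrable iid_copies (\<lambda>\<omega>. mix_process s (u, \<omega>) * mix_process t (u, \<omega>))"
    and integral_mix_process_mult_iid:
      "(\<integral>\<omega>. mix_process s (u, \<omega>) * mix_process t (u, \<omega>) \<partial>iid_copies) =
        cond_cov s t (cov_Y s t) u"
proof -
  have "mix_process s (u, \<omega>) * mix_process t (u, \<omega>) =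
      mix_coeff (fst u) (snd u) s * mix_coeff (fst u) (snd u) t *
        (\<Prod>i<max (snd u) 1. Y s (\<omega> i) * Y t (\<omega> i))"
    for \<omega>
    by (simp add: mix_process_def prod.distrib)
  then show "integrable iid_copies (\<lambda>\<omega>. mix_process s (u, \<omega>) * mix_process t (u, \<omega>))"
    and "(\<integral>\<omega>. mix_process s (u, \<omega>) * mix_process t (u, \<omega>) \<partial>iid_copies) =
        cond_cov s t (cov_Y s t) u"
    using integrable_prod_PiM_iid[OF prob_space_axioms integrable_Y_mult]
      integral_prod_PiM_iid[OF prob_space_axioms integrable_Y_mult]
    by (simp_all add: iid_copies_def cond_cov_def cov_Y_def)
qed

lemma integrable_mix_process_sq: "integrable mix_space (\<lambda>w. (mix_process t w)\<^sup>2)"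
proof -
  interpret pair_prob_space mix_index iid_copies
    by (rule pair_prob_space_mix_space)
  have "integrable (mix_index \<Otimes>\<^sub>M iid_copies) (\<lambda>w. mix_process t w * mix_process t w)"
  proof (rule Fubini_integrable)
    show "(\<lambda>w. mix_process t w * mix_process t w) \<in> borel_measurable (mix_index \<Otimes>\<^sub>M iid_copies)"
      using mix_process_measurable[of t] by (simp add: mix_space_def)
    have "integrable mix_index (cond_cov t t (cov_Y t t))"
      using var_Y_nonneg[of t] by (intro integrable_mix_index) (simp add: cov_Y_diag)
    then show "integrable mix_index
        (\<lambda>u. \<integral>\<omega>. norm (mix_process t (u, \<omega>) * mix_process t (u, \<omega>)) \<partial>iid_copies)"
      by (simp add: integral_mix_process_mult_iid)
    show "AE u in mix_index. integrable iid_copies (\<lambda>\<omega>. mix_process t (u, \<omega>) * mix_process t (u, \<omega>))"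
      by (simp add: integrable_mix_process_mult_iid)
  qed
  then show ?thesis
    by (simp add: mix_space_def power2_eq_square)
qed

lemma integral_mix_process: "(\<integral>w. mix_process t w \<partial>mix_space) = 0"
proof -
  interpret pair_prob_space mix_index iid_copies
    by (rule pair_prob_space_mix_space)
  interpret mix_space: prob_space mix_space
    by (rule prob_space_mix_space)
  have "integrable mix_space (mix_process t)"
    using mix_process_measurable integrable_mix_process_sq
    by (rule mix_space.square_integrable_imp_integrable)
  then show ?thesis
    using integral_fst'[of "mix_process t"] by (simp add: mix_space_def integral_mix_process_iid)
qed

lemma integral_mix_process_mult:
  "(\<integral>w. mix_process s w * mix_process t w \<partial>mix_space) =
    2 * b * cov_Y s t +
      (\<integral>x. exp (- x * (var_Y s + var_Y t - 2 * cov_Y s t)) - exp (- x * (var_Y s + var_Y t)) \<partial>\<mu>)"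
proof -
  interpret pair_prob_space mix_index iid_copies
    by (rule pair_prob_space_mix_space)
  have int: "integrable (mix_index \<Otimes>\<^sub>M iid_copies) (\<lambda>w. mix_process s w * mix_process t w)"
    using integrable_mult_of_squares[OF mix_process_measurable mix_process_measurable
        integrable_mix_process_sq integrable_mix_process_sq]
    by (simp add: mix_space_def)
  have "(\<integral>w. mix_process s w * mix_process t w \<partial>mix_space) =
      (\<integral>u. (\<integral>\<omega>. mix_process s (u, \<omega>) * mix_process t (u, \<omega>) \<partial>iid_copies) \<partial>mix_index)"
    using integral_fst'[OF int] by (simp add: mix_space_def)
  also have "\<dots> = (\<integral>u. cond_cov s t (cov_Y s t) u \<partial>mix_index)"
    by (simp add: integral_mix_process_mult_iid)
  also have "\<dots> = 2 * b * cov_Y s t +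
      (\<integral>x. exp (- x * (var_Y s + var_Y t - 2 * cov_Y s t)) - exp (- x * (var_Y s + var_Y t)) \<partial>\<mu>)"
  proof (rule integral_mix_index[OF _ cov_Y_le])
    show "integrable mix_index (cond_cov s t (cov_Y s t))"
      using integrable_fst'[OF int] by (simp add: integral_mix_process_mult_iid)
  qed
  finally show ?thesis .
qed

lemma cov_fun_mix_process:
  "cov_fun mix_space mix_process s t =
    2 * b * cov_Y s t +
      (\<integral>x. exp (- x * (var_Y s + var_Y t - 2 * cov_Y s t)) - exp (- x * (var_Y s + var_Y t)) \<partial>\<mu>)"
  unfolding cov_fun_def integral_mix_process by (simp add: integral_mix_process_mult)

end

theorem proposition2p1:
  fixes M :: "'a measure" and Y :: "real \<Rightarrow> 'a \<Rightarrow> real" and f :: "real \<Rightarrow> real"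
  assumes "prob_space M"
    and "\<And>t. Y t \<in> borel_measurable M"
    and "\<And>t. integrable M (\<lambda>\<omega>. (Y t \<omega>)\<^sup>2)"
    and "\<And>t. (\<integral>\<omega>. Y t \<omega> \<partial>M) = 0"
    and "stationary_increments M Y"
    and "bernstein_function f"
  shows "\<exists>(N :: (real \<Rightarrow> real) measure) (Z :: real \<Rightarrow> (real \<Rightarrow> real) \<Rightarrow> real).
           prob_space N \<and>
           (\<forall>t. Z t \<in> borel_measurable N \<and> integrable N (\<lambda>\<omega>. (Z t \<omega>)\<^sup>2)) \<and>
           (\<forall>s t. cov_fun N Z s t =
              f ((\<integral>\<omega>. (Y s \<omega>)\<^sup>2 \<partial>M) + (\<integral>\<omega>. (Y t \<omega>)\<^sup>2 \<partial>M))
              - f (\<integral>\<omega>. (Y (s - t) \<omega>)\<^sup>2 \<partial>M))"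
proof -
  obtain a b \<mu> where "levy_measure \<mu>" and "0 \<le> b"
    and f: "\<And>l. 0 \<le> l \<Longrightarrow> f l = a + b * l + (\<integral>x. 1 - exp (- x * l) \<partial>\<mu>)"
    using assms(6) unfolding bernstein_function_def levy_measure_def by blast
  interpret bernstein_mixture \<mu> M Y b
    using \<open>levy_measure \<mu>\<close> \<open>0 \<le> b\<close> assms(1-4)
    by (simp add: bernstein_mixture_def bernstein_mixture_axioms_def)
  have increment: "(\<integral>\<omega>. (Y (s - t) \<omega>)\<^sup>2 \<partial>M) = var_Y s + var_Y t - 2 * cov_Y s t" for s t
    using stationary_increments_integral[OF assms(5,2), of "\<lambda>x. x\<^sup>2"]
    by (simp add: integral_Y_diff_sq)
  have "cov_fun mix_space mix_process s t =
      f (var_Y s + var_Y t) - f (\<integral>\<omega>. (Y (s - t) \<omega>)\<^sup>2 \<partial>M)" for s t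
    using bernstein_diff[OF f, of "var_Y s + var_Y t - 2 * cov_Y s t" "var_Y s + var_Y t"]
      cov_Y_le[of s t] var_Y_nonneg[of s] var_Y_nonneg[of t]
    by (simp add: increment cov_fun_mix_process)
  then show ?thesis
    using path_space_realization[OF prob_space_mix_space, of mix_process] integrable_mix_process_sq
    by (simp add: var_Y_def)
qed

end
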